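(* Let $N\in\mathbb{Z}_{\ge2}$ and let $b_1,\dots,b_t$ be any ordering of $\mathscr{B}_N$, with associated sequence $\Delta_1,\dots,\Delta_t$. Then the vectors $$\sum_{j=1}^t c_{b_j}e_{b_j}-\Big(\sum_{j=1}^t c_{b_j}\Big)e_1,\qquad c_{b_j}\in\mathbb{Z},\ 0\le c_{b_j}<\Delta_j,$$ form a complete system of representatives of $S(N)/Z(N)$.
   Context: $\mathscr{D}(N)$ is the set of positive divisors of $N$, $\{e_n\}_{n\mid N}$ the standard basis of $\mathbb{Z}^{\mathscr{D}(N)}$. $S(N)=\{(r_n)_{n\mid N}\in\mathbb{Z}^{\mathscr{D}(N)}:\sum_n r_n=0\}$. $Z(N)$ is the subgroup of $(r_n)\in S(N)$ with $\sum_{n\mid N}nr_n\equiv0\pmod{24}$, $\sum_{n\mid N}\frac Nn r_n\equiv0\pmod{24}$, and $\prod_{n:\,r_n\text{ odd}}n$ a perfect square. For a prime $p\mid N$: $\mathscr{B}_N^p=\{p\}$ if $p\ne2,3$; $\mathscr{B}_N^2=\{2\}$ if $v_2(N)=1$, $\{2,4\}$ if $v_2(N)=2$, $\{2^{\alpha-2},2^{\alpha-1},2^\alpha\}$ if $v_2(N)=\alpha\ge3$; $\mathscr{B}_N^3=\{3\}$ if $v_3(N)=1$, $\{3^{\alpha-1},3^\alpha\}$ if $v_3(N)=\alpha\ge2$; $\mathscr{B}_N=\bigcup_{p\mid N}\mathscr{B}_N^p$. For integers $(c_n)_{n\in\mathscr{B}_N}$ consider the system (S): $\sum_{n\in\mathscr{B}_N}(n-1)c_n\equiv0\pmod{24}$;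 $\sum_{n\in\mathscr{B}_N}(N/n-N)c_n\equiv0\pmod{24}$; $c_p\equiv0\pmod2$ for every prime $p\mid N$, $p\ne2,3$; $\sum_{2^\beta\in\mathscr{B}_N,\,c_{2^\beta}\text{ odd}}\beta\equiv0\pmod2$ and $\sum_{3^\beta\in\mathscr{B}_N,\,c_{3^\beta}\text{ odd}}\beta\equiv0\pmod2$. For an ordering $b_1,\dots,b_t$ of $\mathscr{B}_N$, $\Delta_i$ is the least $m\in\{1,\dots,24\}$ such that some $(c_n)$ satisfies (S) with $c_{b_j}=0$ for $j<i$ and $c_{b_i}=m$. *)

theory Defs
  imports "HOL-Computational_Algebra.Primes"
begin

definition divs :: "nat \<Rightarrow> nat set" where
  "divs N = {n. 0 < n \<and> n dvd N}"

text \<open>Vectors in Z^{D(N)} are functions nat => int vanishing outside divs N;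
  standard basis vector e_m.\<close>
definition evec :: "nat \<Rightarrow> nat \<Rightarrow> int" where
  "evec m = (\<lambda>n. if n = m then 1 else 0)"

definition SN :: "nat \<Rightarrow> (nat \<Rightarrow> int) set" where
  "SN N = {r. (\<forall>n. n \<notin> divs N \<longrightarrow> r n = 0) \<and> (\<Sum>n\<in>divs N. r n) = 0}"

definition ZN :: "nat \<Rightarrow> (nat \<Rightarrow> int) set" where
  "ZN N = {r \<in> SN N.
      (\<Sum>n\<in>divs N. int n * r n) mod 24 = 0 \<and>
      (\<Sum>n\<in>divs N. int (N div n) * r n) mod 24 = 0 \<and>
      (\<exists>k::nat. (\<Prod>n\<in>{n\<in>divs N. odd (r n)}. n) = k ^ 2)}"

definition B2 :: "nat \<Rightarrow> nat set" where
  "B2 N = (let a = multiplicity (2::nat) N in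
     if a = 0 then {} else if a = 1 then {2} else if a = 2 then {2, 4}
     else {2 ^ (a - 2), 2 ^ (a - 1), 2 ^ a})"

definition B3 :: "nat \<Rightarrow> nat set" where
  "B3 N = (let a = multiplicity (3::nat) N in
     if a = 0 then {} else if a = 1 then {3}
     else {3 ^ (a - 1), 3 ^ a})"

definition BN :: "nat \<Rightarrow> nat set" where
  "BN N = {p. prime p \<and> p dvd N \<and> p \<noteq> 2 \<and> p \<noteq> 3} \<union> B2 N \<union> B3 N"

definition sysS :: "nat \<Rightarrow> (nat \<Rightarrow> int) \<Rightarrow> bool" where
  "sysS N c \<longleftrightarrow>
     (\<Sum>n\<in>BN N. (int n - 1) * c n) mod 24 = 0 \<and>
     (\<Sum>n\<in>BN N. (int (N div n) - int N) * c n) mod 24 = 0 \<and>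
     (\<forall>p. prime p \<and> p dvd N \<and> p \<noteq> 2 \<and> p \<noteq> 3 \<longrightarrow> even (c p)) \<and>
     even (\<Sum>\<beta>\<in>{\<beta>::nat. 2 ^ \<beta> \<in> B2 N \<and> odd (c (2 ^ \<beta>))}. \<beta>) \<and>
     even (\<Sum>\<beta>\<in>{\<beta>::nat. 3 ^ \<beta> \<in> B3 N \<and> odd (c (3 ^ \<beta>))}. \<beta>)"

text \<open>Delta for the ordering bs (0-indexed: Delta N bs i is Delta_{i+1}).\<close>
definition Delta :: "nat \<Rightarrow> nat list \<Rightarrow> nat \<Rightarrow> int" where
  "Delta N bs i = (LEAST m::int. 1 \<le> m \<and> m \<le> 24 \<and>
      (\<exists>c. sysS N c \<and> (\<forall>j<i. c (bs ! j) = 0) \<and> c (bs ! i) = m))"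

text \<open>The vector sum_j c_j e_{b_j} - (sum_j c_j) e_1, with c indexed by positions.\<close>
definition repvec :: "nat list \<Rightarrow> (nat \<Rightarrow> int) \<Rightarrow> nat \<Rightarrow> int" where
  "repvec bs c = (\<lambda>n. (\<Sum>j<length bs. c j * evec (bs ! j) n)
                      - (\<Sum>j<length bs. c j) * evec 1 n)"

definition Reps :: "nat \<Rightarrow> nat list \<Rightarrow> (nat \<Rightarrow> int) set" where
  "Reps N bs = {repvec bs c | c. \<forall>j<length bs. 0 \<le> c j \<and> c j < Delta N bs j}"

end

theory Submission
  imports Defs "HOL-Computational_Algebra.Nth_Powers"
begin

(* Attach to r in Z^D(N) its weights: sum_n n r_n, sum_n (N/n) r_n and, for each prime p,
   sum_n v_p(n) r_n. On S(N), lying in Z(N) means that the first two weights vanish modulo 24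
   and the p-adic ones are even. Modulo such vectors e_{xy} - e_1 = (e_x - e_1) + x (e_y - e_1)
   as soon as x^2 = 1; working separately modulo 8 (x odd) and modulo 3 (x prime to 3) and
   gluing by CRT, every e_n - e_1 with n | N becomes an integral combination of the e_b - e_1,
   b in B_N, where powers of 2 and 3 need explicit relations with the top exponents kept in
   B_N. Such a combination sum c_b (e_b - e_1) lies in Z(N) iff c solves (S); these c form a
   lattice containing 24 Z^B_N, and reducing the coefficients along b_1, ..., b_t against the
   lattice vectors realising Delta_1, ..., Delta_t is a triangular reduction that gives both
   existence and uniqueness of the representative. *)

section \<open>Weights of vectors indexed by divisors\<close>

(* Indices 0 and 1 carry the two weights tested modulo 24 in ZN; an index i \<ge> 2 carries
   the i-adic valuation, which is only ever read at primes i. *)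
definition weight :: "nat \<Rightarrow> nat \<Rightarrow> nat \<Rightarrow> int" where
  "weight N i n =
     (if i = 0 then int n else if i = 1 then int (N div n) else int (multiplicity i n))"

definition weights :: "nat \<Rightarrow> (nat \<Rightarrow> int) \<Rightarrow> nat \<Rightarrow> int" where
  "weights N v i = (\<Sum>n\<in>divs N. weight N i n * v n)"

definition basic_weights :: "nat \<Rightarrow> nat \<Rightarrow> nat \<Rightarrow> int" where
  "basic_weights N n i = weight N i n - weight N i 1"

(* Weights negligible for (24, True) characterise ZN (ZN_iff_negligible); the weaker levels
   (8, True) and (3, False) are treated separately and glued in B_spanned_crt. *)
definition negligible :: "int \<Rightarrow> bool \<Rightarrow> (nat \<Rightarrow> int) \<Rightarrow> bool" where
  "negligible m par v \<longleftrightarrow>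
     m dvd v 0 \<and> m dvd v 1 \<and> (par \<longrightarrow> (\<forall>p. prime p \<longrightarrow> even (v p)))"

definition B_comb :: "nat \<Rightarrow> (nat \<Rightarrow> int) \<Rightarrow> nat \<Rightarrow> int" where
  "B_comb N c i = (\<Sum>b\<in>BN N. c b * basic_weights N b i)"

definition B_spanned :: "nat \<Rightarrow> int \<Rightarrow> bool \<Rightarrow> (nat \<Rightarrow> int) \<Rightarrow> bool" where
  "B_spanned N m par v \<longleftrightarrow> (\<exists>c. negligible m par (\<lambda>i. v i - B_comb N c i))"

lemma basic_weights_0: "basic_weights N n 0 = int n - 1"
  by (simp add: basic_weights_def weight_def)

lemma basic_weights_1: "basic_weights N n 1 = int (N div n) - int N"
  by (simp add: basic_weights_def weight_def)

lemma basic_weights_prime: "prime p \<Longrightarrow> basic_weights N n p = int (multiplicity p n)"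
  by (auto simp: basic_weights_def weight_def)

lemma basic_weights_1_eq_0 [simp]: "basic_weights N 1 = (\<lambda>i. 0)"
  by (auto simp: basic_weights_def)

lemma negligible_zero [simp]: "negligible m par (\<lambda>i. 0)"
  by (simp add: negligible_def)

lemma negligible_add: "negligible m par v \<Longrightarrow> negligible m par w \<Longrightarrow> negligible m par (\<lambda>i. v i + w i)"
  by (auto simp: negligible_def)

lemma negligible_smult: "negligible m par v \<Longrightarrow> negligible m par (\<lambda>i. k * v i)"
  by (auto simp: negligible_def)

lemma negligible_diff: "negligible m par v \<Longrightarrow> negligible m par w \<Longrightarrow> negligible m par (\<lambda>i. v i - w i)"
  by (auto simp: negligible_def)

lemma negligible_diff_iff:
  assumes "negligible m par (\<lambda>i. x i - a i)"
  shows "negligible m par (\<lambda>i. x i - b i) \<longleftrightarrow> negligible m par (\<lambda>i. a i - b i)"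
proof
  assume "negligible m par (\<lambda>i. x i - b i)"
  from negligible_diff[OF this assms] show "negligible m par (\<lambda>i. a i - b i)" by simp
next
  assume "negligible m par (\<lambda>i. a i - b i)"
  from negligible_add[OF assms this] show "negligible m par (\<lambda>i. x i - b i)" by simp
qed

lemma prime_3_nat: "prime (3::nat)"
  by (simp add: prime_iff)

lemma finite_divs: "N > 0 \<Longrightarrow> finite (divs N)"
  by (rule finite_subset[of _ "{..N}"]) (auto simp: divs_def dest: dvd_imp_le)

lemma finite_BN: "N > 0 \<Longrightarrow> finite (BN N)"
proof -
  assume "N > 0"
  have "finite {p. prime p \<and> p dvd N \<and> p \<noteq> 2 \<and> p \<noteq> 3}"
    by (rule finite_subset[of _ "{..N}"]) (use \<open>N > 0\<close> in \<open>auto dest: dvd_imp_le\<close>)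
  moreover have "finite (B2 N)" "finite (B3 N)" by (simp_all add: B2_def B3_def Let_def)
  ultimately show ?thesis by (simp add: BN_def)
qed

lemma B_comb_add: "B_comb N (\<lambda>b. c b + d b) i = B_comb N c i + B_comb N d i"
  by (simp add: B_comb_def distrib_right sum.distrib)

lemma B_comb_smult: "B_comb N (\<lambda>b. k * c b) i = k * B_comb N c i"
  by (simp add: B_comb_def sum_distrib_left mult.assoc)

lemma B_spanned_add:
  assumes "B_spanned N m par v" and "B_spanned N m par w"
  shows "B_spanned N m par (\<lambda>i. v i + w i)"
proof -
  obtain c d where "negligible m par (\<lambda>i. v i - B_comb N c i)"
    and "negligible m par (\<lambda>i. w i - B_comb N d i)"
    using assms by (auto simp: B_spanned_def)
  from negligible_add[OF this] show ?thesis
    unfolding B_spanned_def by (intro exI[of _ "\<lambda>b. c b + d b"]) (simp add: B_comb_add algebra_simps)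
qed

lemma B_spanned_smult: "B_spanned N m par v \<Longrightarrow> B_spanned N m par (\<lambda>i. k * v i)"
proof -
  assume "B_spanned N m par v"
  then obtain c where "negligible m par (\<lambda>i. v i - B_comb N c i)" by (auto simp: B_spanned_def)
  from negligible_smult[OF this, of k] show ?thesis
    unfolding B_spanned_def by (intro exI[of _ "\<lambda>b. k * c b"]) (simp add: B_comb_smult algebra_simps)
qed

lemma B_spanned_zero [simp]: "B_spanned N m par (\<lambda>i. 0)"
  unfolding B_spanned_def by (intro exI[of _ "\<lambda>b. 0"]) (simp add: B_comb_def)

lemma B_spanned_cong:
  "B_spanned N m par w \<Longrightarrow> negligible m par (\<lambda>i. v i - w i) \<Longrightarrow> B_spanned N m par v"
  unfolding B_spanned_def using negligible_add by fastforce

lemma B_spanned_sum: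
  "finite A \<Longrightarrow> (\<And>x. x \<in> A \<Longrightarrow> B_spanned N m par (f x)) \<Longrightarrow> B_spanned N m par (\<lambda>i. \<Sum>x\<in>A. f x i)"
  by (induction A rule: finite_induct) (auto intro: B_spanned_add)

lemma B_comb_single:
  assumes "N > 0" and "b \<in> BN N"
  shows "B_comb N (\<lambda>x. if x = b then k else 0) = (\<lambda>i. k * basic_weights N b i)"
proof
  fix i
  have "B_comb N (\<lambda>x. if x = b then k else 0) i
      = (\<Sum>x\<in>BN N. if x = b then k * basic_weights N x i else 0)"
    unfolding B_comb_def by (rule sum.cong) auto
  then show "B_comb N (\<lambda>x. if x = b then k else 0) i = k * basic_weights N b i"
    using assms finite_BN by simp
qed

lemma B_spanned_basic_weights:
  "N > 0 \<Longrightarrow> b \<in> BN N \<Longrightarrow> B_spanned N m par (basic_weights N b)"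
  unfolding B_spanned_def by (intro exI[of _ "\<lambda>x. if x = b then 1 else 0"]) (simp add: B_comb_single)

(* 9 + 16 = 25 with 8 dividing 16 and 3 dividing 9 *)
lemma B_spanned_crt:
  assumes "B_spanned N 8 True v" and "B_spanned N 3 False v"
  shows "B_spanned N 24 True v"
proof -
  obtain c d where c: "negligible 8 True (\<lambda>i. v i - B_comb N c i)"
    and d: "negligible 3 False (\<lambda>i. v i - B_comb N d i)"
    using assms by (auto simp: B_spanned_def)
  have combine: "v i - B_comb N (\<lambda>b. 9 * c b + 16 * d b) i =
    9 * (v i - B_comb N c i) + 16 * (v i - B_comb N d i) - 24 * v i" for i
    by (simp only: B_comb_add B_comb_smult) (simp add: algebra_simps)
  have mod24: "24 dvd 9 * x + 16 * y - 24 * z" if "8 dvd x" "3 dvd y" for x y z :: int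
    using that by presburger
  have parity: "even (9 * x + 16 * y - 24 * z)" if "even x" for x y z :: int
    using that by presburger
  have "negligible 24 True (\<lambda>i. v i - B_comb N (\<lambda>b. 9 * c b + 16 * d b) i)"
    unfolding combine negligible_def
    by (intro conjI allI impI mod24 parity) (use c d in \<open>auto simp: negligible_def\<close>)
  then show ?thesis unfolding B_spanned_def by (rule exI[of _ "\<lambda>b. 9 * c b + 16 * d b"])
qed

section \<open>Reducing divisors to the basis B_N\<close>

definition square_one :: "int \<Rightarrow> bool \<Rightarrow> nat \<Rightarrow> bool" where
  "square_one m par x \<longleftrightarrow> m dvd (int x)^2 - 1 \<and> (par \<longrightarrow> odd x)"

lemma square_one_8: "odd x \<Longrightarrow> square_one 8 True x"
proof -
  assume "odd x"
  then obtain k where "x = 2 * k + 1" using oddE by blast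
  then have "(int x)^2 - 1 = 4 * (int k * (int k + 1))" by (simp add: power2_eq_square algebra_simps)
  moreover have "4 * 2 dvd 4 * (int k * (int k + 1))" by (rule mult_dvd_mono) simp_all
  ultimately show ?thesis using \<open>odd x\<close> by (simp add: square_one_def)
qed

lemma square_one_3: "\<not> 3 dvd x \<Longrightarrow> square_one 3 False x"
proof -
  assume "\<not> 3 dvd x"
  define k where "k = x div 3"
  have "x = 3 * k + 1 \<or> x = 3 * k + 2"
    using \<open>\<not> 3 dvd x\<close> unfolding k_def by presburger
  then have "(int x)^2 - 1 = 3 * (3 * int k * int k + 2 * int k) \<or>
             (int x)^2 - 1 = 3 * (3 * int k * int k + 4 * int k + 1)"
    by (auto simp: power2_eq_square algebra_simps)
  then show ?thesis by (auto simp: square_one_def)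
qed

lemma basic_weights_mult:
  assumes "N > 0" and "x * y dvd N"
  shows "basic_weights N (x * y) 0 - basic_weights N x 0 - int x * basic_weights N y 0 = 0"
    and "basic_weights N (x * y) 1 - basic_weights N x 1 - int x * basic_weights N y 1
           = int (N div (x * y)) * (1 - int y) * (1 - (int x)^2)"
    and "prime p \<Longrightarrow> basic_weights N (x * y) p - basic_weights N x p - int x * basic_weights N y p
           = (1 - int x) * int (multiplicity p y)"
proof -
  obtain K where K: "N = x * y * K" using assms(2) by blast
  then have "x > 0" "y > 0" using assms(1) by auto
  show "basic_weights N (x * y) 0 - basic_weights N x 0 - int x * basic_weights N y 0 = 0"
    by (simp add: basic_weights_0 algebra_simps)
  have "N div (x * y) = K" "N div x = y * K" "N div y = x * K"
    using K \<open>x > 0\<close> \<open>y > 0\<close> by auto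
  then show "basic_weights N (x * y) 1 - basic_weights N x 1 - int x * basic_weights N y 1
      = int (N div (x * y)) * (1 - int y) * (1 - (int x)^2)"
    unfolding basic_weights_1 by (simp add: K power2_eq_square algebra_simps)
  assume "prime p"
  then have "multiplicity p (x * y) = multiplicity p x + multiplicity p y"
    using \<open>x > 0\<close> \<open>y > 0\<close> by (simp add: prime_elem_multiplicity_mult_distrib)
  then show "basic_weights N (x * y) p - basic_weights N x p - int x * basic_weights N y p
      = (1 - int x) * int (multiplicity p y)"
    using \<open>prime p\<close> by (simp add: basic_weights_prime algebra_simps)
qed

lemma negligible_basic_weights_mult:
  assumes "N > 0" and "x * y dvd N" and "square_one m par x"
  shows "negligible m par
           (\<lambda>i. basic_weights N (x * y) i - basic_weights N x i - int x * basic_weights N y i)"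
proof -
  have "m dvd 1 - (int x)^2"
    using assms(3) by (simp add: square_one_def dvd_diff_commute)
  then show ?thesis
    using assms basic_weights_mult[OF assms(1,2)] by (auto simp: negligible_def square_one_def)
qed

lemma negligible_basic_weights_square:
  assumes N: "N > 0" and dvd: "x^2 * y dvd N" and x: "square_one m par x"
  shows "negligible m par (\<lambda>i. basic_weights N (x^2 * y) i - basic_weights N y i)"
proof -
  have x0: "x > 0" and m: "m dvd (int x)^2 - 1"
    using x dvd N by (auto simp: square_one_def intro: Nat.gr0I)
  have "(int (x^2))^2 - 1 = ((int x)^2 - 1) * ((int x)^2 + 1)"
    by (simp add: power2_eq_square algebra_simps)
  then have "square_one m par (x^2)"
    using x by (simp add: square_one_def)
  then have mult: "negligible m par (\<lambda>i. basic_weights N (x^2 * y) i - basic_weights N (x^2) i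
                                        - int (x^2) * basic_weights N y i)"
    by (rule negligible_basic_weights_mult[OF N dvd])
  obtain K where K: "N = x^2 * K" using dvd dvd_mult_left by blast
  have "basic_weights N (x^2) 1 = int K * (1 - (int x)^2)"
    using K x0 unfolding basic_weights_1 by (simp add: algebra_simps)
  moreover have "m dvd int K * (1 - (int x)^2)"
    using m by (simp add: dvd_diff_commute)
  moreover have "even (basic_weights N (x^2) p)" if "prime p" for p
    using that x0 by (simp add: basic_weights_prime prime_elem_multiplicity_power_distrib)
  ultimately have square: "negligible m par (basic_weights N (x^2))"
    using m by (simp add: negligible_def basic_weights_0)
  have "negligible m par (\<lambda>i. ((int x)^2 - 1) * basic_weights N y i)"
    using m x by (simp add: negligible_def square_one_def)
  from negligible_add[OF negligible_add[OF mult square] this] show ?thesis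
    by (simp add: algebra_simps)
qed

lemma B_spanned_mult:
  assumes "negligible m par
             (\<lambda>i. basic_weights N (x * y) i - basic_weights N x i - int x * basic_weights N y i)"
    and "B_spanned N m par (basic_weights N x)" and "B_spanned N m par (basic_weights N y)"
  shows "B_spanned N m par (basic_weights N (x * y))"
proof -
  have "B_spanned N m par (\<lambda>i. basic_weights N x i + int x * basic_weights N y i)"
    using assms by (intro B_spanned_add B_spanned_smult)
  then show ?thesis
    by (rule B_spanned_cong) (use assms(1) in \<open>simp add: algebra_simps\<close>)
qed

lemma B_spanned_of_prime_factors:
  assumes N: "N > 0" and "n dvd N"
    and "\<And>q. prime q \<Longrightarrow> q dvd n \<Longrightarrow> square_one m par q \<and> B_spanned N m par (basic_weights N q)"
  shows "B_spanned N m par (basic_weights N n)"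
  using assms(2,3)
proof (induction n rule: less_induct)
  case (less n)
  show ?case
  proof (cases "n = 1")
    case True
    show ?thesis unfolding True basic_weights_1_eq_0 by (rule B_spanned_zero)
  next
    case False
    then obtain q where q: "prime q" "q dvd n" using prime_factor_nat by blast
    then obtain n' where n: "n = q * n'" by blast
    have "n > 0" using less.prems(1) N by (auto intro: Nat.gr0I)
    then have "n' < n" using n prime_gt_1_nat[OF q(1)] by simp
    moreover have "n' dvd N" using less.prems(1) n by (meson dvd_mult_right dvd_trans)
    ultimately have IH: "B_spanned N m par (basic_weights N n')"
      using less.IH less.prems(2) n by auto
    have "square_one m par q" "B_spanned N m par (basic_weights N q)"
      using less.prems(2) q by auto
    then show ?thesis
      using B_spanned_mult[OF negligible_basic_weights_mult[OF N] _ IH] less.prems(1) n by blast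
  qed
qed

lemma B_spanned_cancel_square:
  assumes "N > 0" and "x^2 * y dvd N" and "square_one m par x"
    and "B_spanned N m par (basic_weights N (x^2 * y))"
  shows "B_spanned N m par (basic_weights N y)"
proof (rule B_spanned_cong[OF assms(4)])
  show "negligible m par (\<lambda>i. basic_weights N y i - basic_weights N (x^2 * y) i)"
    using negligible_smult[OF negligible_basic_weights_square[OF assms(1-3)], of "-1"] by simp
qed

lemma pow2_in_BN:
  assumes "1 \<le> k" "k \<le> multiplicity 2 N" "multiplicity 2 N \<le> 3 \<or> multiplicity 2 N - 2 \<le> k"
  shows "2^k \<in> BN N"
proof -
  define a where "a = multiplicity (2::nat) N"
  have "2^k \<in> B2 N"
  proof (cases "a \<le> 3")
    case True
    then have "a = 1 \<or> a = 2 \<or> a = 3" "k = 1 \<or> k = 2 \<or> k = 3" using assms a_def by linarith+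
    then show ?thesis using assms unfolding B2_def Let_def a_def[symmetric] by auto
  next
    case False
    then have "k = a - 2 \<or> k = a - 1 \<or> k = a" using assms a_def by linarith
    then show ?thesis using False unfolding B2_def Let_def a_def[symmetric] by auto
  qed
  then show ?thesis by (simp add: BN_def)
qed

lemma pow3_in_BN:
  assumes "1 \<le> k" "k \<le> multiplicity 3 N" "multiplicity 3 N \<le> 2 \<or> multiplicity 3 N - 1 \<le> k"
  shows "3^k \<in> BN N"
proof -
  define a where "a = multiplicity (3::nat) N"
  have "3^k \<in> B3 N"
  proof (cases "a \<le> 2")
    case True
    then have "a = 1 \<or> a = 2" "k = 1 \<or> k = 2" using assms a_def by linarith+
    then show ?thesis using assms unfolding B3_def Let_def a_def[symmetric] by auto
  next
    case False
    then have "k = a - 1 \<or> k = a" using assms a_def by linarith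
    then show ?thesis using False unfolding B3_def Let_def a_def[symmetric] by auto
  qed
  then show ?thesis by (simp add: BN_def)
qed

lemma B2_elem: "b \<in> B2 N \<Longrightarrow> \<exists>k. 1 \<le> k \<and> k \<le> multiplicity 2 N \<and> b = 2^k"
proof -
  assume b: "b \<in> B2 N"
  define a where "a = multiplicity (2::nat) N"
  consider "a = 1" "b = 2" | "a = 2" "b = 2 \<or> b = 4" | "a \<ge> 3" "b = 2^(a-2) \<or> b = 2^(a-1) \<or> b = 2^a"
    using b unfolding B2_def Let_def a_def[symmetric] by (auto split: if_splits)
  then show ?thesis
  proof cases
    case 1 then show ?thesis by (intro exI[of _ 1]) (auto simp: a_def)
  next
    case 2 then show ?thesis by (auto simp: a_def intro: exI[of _ 1] exI[of _ 2])
  next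
    case 3 then show ?thesis
      by (auto simp: a_def[symmetric] intro: exI[of _ "a-2"] exI[of _ "a-1"] exI[of _ a])
  qed
qed

lemma B3_elem: "b \<in> B3 N \<Longrightarrow> \<exists>k. 1 \<le> k \<and> k \<le> multiplicity 3 N \<and> b = 3^k"
proof -
  assume b: "b \<in> B3 N"
  define a where "a = multiplicity (3::nat) N"
  consider "a = 1" "b = 3" | "a \<ge> 2" "b = 3^(a-1) \<or> b = 3^a"
    using b unfolding B3_def Let_def a_def[symmetric] by (auto split: if_splits)
  then show ?thesis
  proof cases
    case 1 then show ?thesis by (intro exI[of _ 1]) (auto simp: a_def)
  next
    case 2 then show ?thesis
      by (auto simp: a_def[symmetric] intro: exI[of _ "a-1"] exI[of _ a])
  qed
qed

lemma BN_subset_divs: "N > 0 \<Longrightarrow> BN N \<subseteq> divs N"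
proof
  fix b assume "N > 0" "b \<in> BN N"
  then consider "prime b" "b dvd N" | "b \<in> B2 N" | "b \<in> B3 N" unfolding BN_def by blast
  then show "b \<in> divs N"
  proof cases
    case 1 then show ?thesis by (auto simp: divs_def prime_gt_0_nat)
  next
    case 2 then obtain k where "k \<le> multiplicity 2 N" "b = 2^k" using B2_elem by blast
    then show ?thesis by (auto simp: divs_def multiplicity_dvd')
  next
    case 3 then obtain k where "k \<le> multiplicity 3 N" "b = 3^k" using B3_elem by blast
    then show ?thesis by (auto simp: divs_def multiplicity_dvd')
  qed
qed

lemma B2_odd_exponent: "0 < multiplicity 2 N \<Longrightarrow> \<exists>j. odd j \<and> 2^j \<in> BN N"
proof -
  assume pos: "0 < multiplicity 2 N"
  show ?thesis
  proof (cases "odd (multiplicity 2 N)")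
    case True then show ?thesis using pos by (intro exI[of _ "multiplicity 2 N"]) (auto intro: pow2_in_BN)
  next
    case False
    then have "multiplicity 2 N \<ge> 2" using pos by presburger
    then show ?thesis using False by (intro exI[of _ "multiplicity 2 N - 1"]) (auto intro: pow2_in_BN)
  qed
qed

lemma B3_odd_exponent: "0 < multiplicity 3 N \<Longrightarrow> \<exists>j. odd j \<and> 3^j \<in> BN N"
proof -
  assume pos: "0 < multiplicity 3 N"
  show ?thesis
  proof (cases "odd (multiplicity 3 N)")
    case True then show ?thesis using pos by (intro exI[of _ "multiplicity 3 N"]) (auto intro: pow3_in_BN)
  next
    case False
    then have "multiplicity 3 N \<ge> 2" using pos by presburger
    then show ?thesis using False by (intro exI[of _ "multiplicity 3 N - 1"]) (auto intro: pow3_in_BN)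
  qed
qed

lemma B_spanned_prime_of_odd_power:
  assumes N: "N > 0" and B: "q^j \<in> BN N" and "odd j" and x: "square_one m par (q^(j div 2))"
  shows "B_spanned N m par (basic_weights N q)"
proof -
  have "j = 2 * (j div 2) + 1" using \<open>odd j\<close> by simp
  then have pow_j: "q^j = (q^(j div 2))^2 * q"
    by (metis power_add power_mult power_one_right mult.commute)
  have "(q^(j div 2))^2 * q dvd N"
    using B BN_subset_divs[OF N] unfolding pow_j by (auto simp: divs_def)
  moreover have "B_spanned N m par (basic_weights N ((q^(j div 2))^2 * q))"
    using B_spanned_basic_weights[OF N B] unfolding pow_j .
  ultimately show ?thesis by (rule B_spanned_cancel_square[OF N _ x])
qed

lemma B_spanned_mod8_prime:
  assumes N: "N > 0" and q: "prime q" "q dvd N" "odd q"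
  shows "B_spanned N 8 True (basic_weights N q)"
proof (cases "q = 3")
  case True
  have "0 < multiplicity 3 N" using q N True by (simp add: prime_multiplicity_gt_zero_iff)
  then obtain j where "3^j \<in> BN N" "odd j" using B3_odd_exponent by blast
  moreover have "square_one 8 True (3^(j div 2))" by (rule square_one_8) simp
  ultimately show ?thesis unfolding True by (rule B_spanned_prime_of_odd_power[OF N])
next
  case False
  then have "q \<in> BN N" using q by (auto simp: BN_def)
  then show ?thesis by (rule B_spanned_basic_weights[OF N])
qed

lemma B_spanned_mod3_prime:
  assumes N: "N > 0" and q: "prime q" "q dvd N" "q \<noteq> 3"
  shows "B_spanned N 3 False (basic_weights N q)"
proof (cases "q = 2")
  case True
  have "0 < multiplicity 2 N" using q N True by (simp add: prime_multiplicity_gt_zero_iff)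
  then obtain j where "2^j \<in> BN N" "odd j" using B2_odd_exponent by blast
  moreover have "\<not> 3 dvd (2::nat)^(j div 2)"
    using prime_dvd_power[OF prime_3_nat] by fastforce
  then have "square_one 3 False (2^(j div 2))" by (rule square_one_3)
  ultimately show ?thesis unfolding True by (rule B_spanned_prime_of_odd_power[OF N])
next
  case False
  then have "q \<in> BN N" using q by (auto simp: BN_def)
  then show ?thesis by (rule B_spanned_basic_weights[OF N])
qed

lemma basic_weights_prime_power:
  assumes q: "prime q" and N: "N = q^e * N'" and k: "k \<le> e"
  shows "basic_weights N (q^k) 0 = int q^k - 1"
    and "basic_weights N (q^k) 1 = int q^(e-k) * int N' - int q^e * int N'"
    and "prime p \<Longrightarrow> basic_weights N (q^k) p = (if p = q then int k else 0)"
proof -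
  show "basic_weights N (q^k) 0 = int q^k - 1" by (simp add: basic_weights_0)
  have "N = q^k * (q^(e-k) * N')" using k N by (simp add: power_add[symmetric])
  then have "N div q^k = q^(e-k) * N'" using q by (simp add: prime_gt_0_nat)
  then show "basic_weights N (q^k) 1 = int q^(e-k) * int N' - int q^e * int N'"
    unfolding basic_weights_1 using N by simp
  assume "prime p"
  then show "basic_weights N (q^k) p = (if p = q then int k else 0)"
    using q
    by (simp add: basic_weights_prime prime_elem_multiplicity_power_distrib prime_multiplicity_other)
qed

(* The coefficients sum to -s and 4 t + 2 (s - 3 t) + (2 t - 2 s) = 0, which makes the first two
   weights agree modulo 8; t is chosen so that the 2-adic weights agree exactly. *)
lemma negligible_pow2_reduction:
  assumes N: "N = 2^(e+2) * N'" and a: "1 \<le> a" "a < e"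
  defines "s \<equiv> (2::int)^a - 1" and "t \<equiv> int a + (2^a - 1) * (int e + 3)"
  shows "negligible 8 True (\<lambda>i. basic_weights N (2^a) i - (t * basic_weights N (2^e) i
           + (s - 3*t) * basic_weights N (2^(e+1)) i + (2*t - 2*s) * basic_weights N (2^(e+2)) i))"
    (is "negligible 8 True (\<lambda>i. ?d i)")
proof -
  have le: "a \<le> e + 2" "e \<le> e + 2" "e + 1 \<le> e + 2" "e + 2 \<le> e + 2" using a by simp_all
  note bw = basic_weights_prime_power[OF two_is_prime_nat N]
  obtain r where r: "e = a + 1 + r" using less_imp_Suc_add[OF a(2)] by auto
  have "?d 0 = - 3 * 2^e * (t - 2*s)"
    unfolding basic_weights_0 by (simp add: s_def algebra_simps)
  moreover have "8 dvd 3 * 2^e * (t - 2*s)"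
  proof (cases "e = 2")
    case True
    then have "a = 1" using a by simp
    then show ?thesis using True by (simp add: t_def s_def)
  next
    case False
    then have "e = (e - 3) + 3" using a by linarith
    then have "(2::int)^e = 2^(e-3) * 2^3" by (metis power_add)
    then show ?thesis by simp
  qed
  ultimately have d0: "8 dvd ?d 0" by simp
  have "?d 1 = 2^(e+2-a) * int N' - 2^(e+2) * int N' * (1 + s)"
    unfolding bw(2)[OF le(1)] bw(2)[OF le(2)] bw(2)[OF le(3)] bw(2)[OF le(4)]
    by (simp add: algebra_simps)
  also have "\<dots> = 8 * (2^r - 2^(a + r + a)) * int N'"
    unfolding r s_def by (simp add: power_add algebra_simps)
  finally have d1: "8 dvd ?d 1" by simp
  have dp: "?d p = 0" if "prime p" for p
    unfolding bw(3)[OF le(1) that] bw(3)[OF le(2) that] bw(3)[OF le(3) that] bw(3)[OF le(4) that]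
    by (simp add: t_def s_def algebra_simps)
  show ?thesis using d0 d1 dp by (simp add: negligible_def)
qed

lemma B_spanned_mod8_pow2:
  assumes N: "N > 0" and a: "a \<le> multiplicity 2 N"
  shows "B_spanned N 8 True (basic_weights N (2^a))"
proof -
  define al where "al = multiplicity (2::nat) N"
  consider "a = 0" | "1 \<le> a" "al \<le> 3 \<or> al - 2 \<le> a" | "1 \<le> a" "a + 3 \<le> al"
    by linarith
  then show ?thesis
  proof cases
    case 1
    show ?thesis unfolding 1 power_0 basic_weights_1_eq_0 by (rule B_spanned_zero)
  next
    case 2
    then have "2^a \<in> BN N" using a by (intro pow2_in_BN) (auto simp: al_def)
    then show ?thesis by (rule B_spanned_basic_weights[OF N])
  next
    case 3
    define e where "e = al - 2"
    obtain N' where "N = 2^al * N'"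
      using multiplicity_decompose'[of N 2] N unfolding al_def by auto
    moreover have "al = e + 2" "a < e" using 3 unfolding e_def by linarith+
    ultimately have N': "N = 2^(e+2) * N'" by simp
    have top: "B_spanned N 8 True (basic_weights N (2^k))" if "e \<le> k" "k \<le> e + 2" for k
      using that 3 by (intro B_spanned_basic_weights[OF N] pow2_in_BN) (auto simp: e_def al_def)
    have "B_spanned N 8 True (\<lambda>i. c1 * basic_weights N (2^e) i
        + c2 * basic_weights N (2^(e+1)) i + c3 * basic_weights N (2^(e+2)) i)" for c1 c2 c3
      by (intro B_spanned_add B_spanned_smult top) simp_all
    then show ?thesis
      by (rule B_spanned_cong) (rule negligible_pow2_reduction[OF N' \<open>1 \<le> a\<close> \<open>a < e\<close>])
  qed
qed

lemma negligible_pow3_reduction: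
  assumes N: "N = 3^(e+1) * N'" and b: "1 \<le> b" "b < e"
  shows "negligible 3 False (\<lambda>i. basic_weights N (3^b) i - basic_weights N (3^e) i)"
proof -
  note bw = basic_weights_prime_power[OF prime_3_nat N]
  obtain r where r: "e = b + 1 + r" using less_imp_Suc_add[OF b(2)] by auto
  have le: "b \<le> e + 1" "e \<le> e + 1" using b by simp_all
  have "3 dvd (3::int)^b - 3^e"
    using b by (intro dvd_diff dvd_power) auto
  then have "3 dvd basic_weights N (3^b) 0 - basic_weights N (3^e) 0"
    by (simp add: basic_weights_0)
  moreover have "basic_weights N (3^b) 1 - basic_weights N (3^e) 1 = 3 * (3^(r + 1) - 1) * int N'"
    unfolding bw(2)[OF le(1)] bw(2)[OF le(2)] unfolding r by (simp add: algebra_simps)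
  ultimately show ?thesis by (simp add: negligible_def)
qed

lemma B_spanned_mod3_pow3:
  assumes N: "N > 0" and b: "b \<le> multiplicity 3 N"
  shows "B_spanned N 3 False (basic_weights N (3^b))"
proof -
  define be where "be = multiplicity (3::nat) N"
  consider "b = 0" | "1 \<le> b" "be \<le> 2 \<or> be - 1 \<le> b" | "1 \<le> b" "b + 2 \<le> be"
    by linarith
  then show ?thesis
  proof cases
    case 1
    show ?thesis unfolding 1 power_0 basic_weights_1_eq_0 by (rule B_spanned_zero)
  next
    case 2
    then have "3^b \<in> BN N" using b by (intro pow3_in_BN) (auto simp: be_def)
    then show ?thesis by (rule B_spanned_basic_weights[OF N])
  next
    case 3
    define e where "e = be - 1"
    obtain N' where "N = 3^be * N'"
      using multiplicity_decompose'[of N 3] N unfolding be_def by auto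
    then have N': "N = 3^(e+1) * N'" and "b < e" using 3 by (simp_all add: e_def)
    have "3^e \<in> BN N" using 3 by (intro pow3_in_BN) (auto simp: e_def be_def)
    then have "B_spanned N 3 False (basic_weights N (3^e))" by (rule B_spanned_basic_weights[OF N])
    then show ?thesis
      by (rule B_spanned_cong) (rule negligible_pow3_reduction[OF N' \<open>1 \<le> b\<close> \<open>b < e\<close>])
  qed
qed

lemma B_spanned_mod8:
  assumes N: "N > 0" and n: "n dvd N"
  shows "B_spanned N 8 True (basic_weights N n)"
proof -
  have nz: "n \<noteq> 0" "\<not> is_unit (2::nat)" using n N by auto
  obtain m k where nm: "n = m * 2^k" and m: "odd m"
    using multiplicity_decompose'[OF nz] by (metis mult.commute)
  have "m dvd N" using n nm by (metis dvd_mult_left)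
  have "2^k dvd N" using n nm by (metis dvd_mult_right)
  then have "B_spanned N 8 True (basic_weights N (2^k))"
    using N by (simp add: power_dvd_iff_le_multiplicity B_spanned_mod8_pow2)
  moreover have "B_spanned N 8 True (basic_weights N m)"
    using \<open>m dvd N\<close> m
    by (intro B_spanned_of_prime_factors[OF N \<open>m dvd N\<close>])
      (auto intro: square_one_8 B_spanned_mod8_prime[OF N] dvd_trans)
  ultimately show ?thesis
    unfolding nm using n nm by (intro B_spanned_mult negligible_basic_weights_mult[OF N] square_one_8 m) auto
qed

lemma B_spanned_mod3:
  assumes N: "N > 0" and n: "n dvd N"
  shows "B_spanned N 3 False (basic_weights N n)"
proof -
  have nz: "n \<noteq> 0" "\<not> is_unit (3::nat)" using n N by auto
  obtain m k where nm: "n = m * 3^k" and m: "\<not> 3 dvd m"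
    using multiplicity_decompose'[OF nz] by (metis mult.commute)
  have "m dvd N" using n nm by (metis dvd_mult_left)
  have "3^k dvd N" using n nm by (metis dvd_mult_right)
  then have "B_spanned N 3 False (basic_weights N (3^k))"
    using N by (simp add: power_dvd_iff_le_multiplicity B_spanned_mod3_pow3)
  moreover have "B_spanned N 3 False (basic_weights N m)"
    using \<open>m dvd N\<close> m
    by (intro B_spanned_of_prime_factors[OF N \<open>m dvd N\<close>])
      (auto intro: square_one_3 B_spanned_mod3_prime[OF N] dvd_trans)
  ultimately show ?thesis
    unfolding nm using n nm by (intro B_spanned_mult negligible_basic_weights_mult[OF N] square_one_3 m) auto
qed

lemma B_spanned_basic_weights_divisor:
  "N > 0 \<Longrightarrow> n dvd N \<Longrightarrow> B_spanned N 24 True (basic_weights N n)"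
  by (intro B_spanned_crt B_spanned_mod8 B_spanned_mod3)

section \<open>Characterising Z(N) and the system (S)\<close>

lemma weights_diff: "weights N (\<lambda>n. v n - w n) i = weights N v i - weights N w i"
  by (simp add: weights_def algebra_simps sum_subtractf)

lemma weights_SN:
  assumes "v \<in> SN N"
  shows "weights N v i = (\<Sum>n\<in>divs N. v n * basic_weights N n i)"
proof -
  have "(\<Sum>n\<in>divs N. v n * basic_weights N n i)
      = weights N v i - weight N i 1 * (\<Sum>n\<in>divs N. v n)"
    by (simp add: weights_def basic_weights_def algebra_simps sum_subtractf sum_distrib_right)
  also have "(\<Sum>n\<in>divs N. v n) = 0" using assms by (simp add: SN_def)
  finally show ?thesis by simp
qed

lemma B_spanned_weights:
  assumes N: "N > 0" and v: "v \<in> SN N"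
  shows "B_spanned N 24 True (weights N v)"
proof -
  have "B_spanned N 24 True (\<lambda>i. \<Sum>n\<in>divs N. v n * basic_weights N n i)"
    using finite_divs[OF N]
    by (rule B_spanned_sum)
      (auto intro: B_spanned_smult B_spanned_basic_weights_divisor[OF N] simp: divs_def)
  moreover have "weights N v = (\<lambda>i. \<Sum>n\<in>divs N. v n * basic_weights N n i)"
    by (rule ext) (rule weights_SN[OF v])
  ultimately show ?thesis by simp
qed

lemma even_sum_mult_iff:
  assumes "finite D"
  shows "even (\<Sum>n\<in>D. (m n :: int) * v n) \<longleftrightarrow> even (\<Sum>n\<in>{n\<in>D. odd (v n)}. m n)"
proof -
  have "even (\<Sum>n\<in>D. m n * v n - (if odd (v n) then m n else 0))"
    by (intro dvd_sum) auto
  moreover have "(\<Sum>n\<in>{n\<in>D. odd (v n)}. m n) = (\<Sum>n\<in>D. if odd (v n) then m n else 0)"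
    using assms by (simp add: sum.inter_filter)
  ultimately show ?thesis by (simp add: sum_subtractf)
qed

lemma is_square_prod_iff:
  assumes "finite A" and "0 \<notin> A"
  shows "(\<exists>k::nat. (\<Prod>n\<in>A. n) = k^2) \<longleftrightarrow> (\<forall>p. prime p \<longrightarrow> even (\<Sum>n\<in>A. multiplicity p n))"
proof -
  have "(\<exists>k::nat. (\<Prod>n\<in>A. n) = k^2) \<longleftrightarrow> is_nth_power 2 (\<Prod>n\<in>A. n)"
    by (auto simp: is_nth_power_def)
  also have "\<dots> \<longleftrightarrow> (\<forall>p. prime p \<longrightarrow> even (multiplicity p (\<Prod>n\<in>A. n)))"
    by (rule is_nth_power_conv_multiplicity_nat) simp
  also have "\<dots> \<longleftrightarrow> (\<forall>p. prime p \<longrightarrow> even (\<Sum>n\<in>A. multiplicity p n))"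
    using assms by (auto simp: prime_elem_multiplicity_prod_distrib)
  finally show ?thesis .
qed

lemma ZN_iff_negligible:
  assumes N: "N > 0" and v: "v \<in> SN N"
  shows "v \<in> ZN N \<longleftrightarrow> negligible 24 True (weights N v)"
proof -
  let ?odd = "{n\<in>divs N. odd (v n)}"
  have w0: "weights N v 0 = (\<Sum>n\<in>divs N. int n * v n)"
    and w1: "weights N v 1 = (\<Sum>n\<in>divs N. int (N div n) * v n)"
    by (simp_all add: weights_def weight_def)
  have wp: "even (weights N v p) \<longleftrightarrow> even (\<Sum>n\<in>?odd. multiplicity p n)" if "prime p" for p
  proof -
    have "weights N v p = (\<Sum>n\<in>divs N. int (multiplicity p n) * v n)"
      using prime_gt_1_nat[OF that] by (simp add: weights_def weight_def)
    then have "even (weights N v p) \<longleftrightarrow> even (\<Sum>n\<in>?odd. int (multiplicity p n))"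
      using even_sum_mult_iff[OF finite_divs[OF N]] by simp
    then show ?thesis by (simp only: of_nat_sum[symmetric] even_of_nat)
  qed
  have "finite ?odd" using finite_divs[OF N] by simp
  then have "(\<exists>k::nat. (\<Prod>n\<in>?odd. n) = k^2) \<longleftrightarrow> (\<forall>p. prime p \<longrightarrow> even (\<Sum>n\<in>?odd. multiplicity p n))"
    by (rule is_square_prod_iff) (simp add: divs_def)
  also have "\<dots> \<longleftrightarrow> (\<forall>p. prime p \<longrightarrow> even (weights N v p))"
    using wp by blast
  finally show ?thesis
    using v unfolding ZN_def negligible_def w0 w1 by (simp add: dvd_eq_mod_eq_0)
qed

lemma B_comb_0: "B_comb N c 0 = (\<Sum>b\<in>BN N. (int b - 1) * c b)"
  by (simp add: B_comb_def basic_weights_0 mult.commute)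

lemma B_comb_1: "B_comb N c 1 = (\<Sum>b\<in>BN N. (int (N div b) - int N) * c b)"
  unfolding B_comb_def basic_weights_1 by (simp add: mult.commute)

lemma B_comb_prime:
  assumes "N > 0" and "prime p"
  shows "B_comb N c p = (\<Sum>b\<in>{b\<in>BN N. p dvd b}. c b * int (multiplicity p b))"
proof -
  have "B_comb N c p = (\<Sum>b\<in>BN N. if p dvd b then c b * int (multiplicity p b) else 0)"
    unfolding B_comb_def basic_weights_prime[OF assms(2)]
    by (rule sum.cong) (auto simp: not_dvd_imp_multiplicity_0)
  then show ?thesis by (simp add: sum.inter_filter[OF finite_BN[OF assms(1)]])
qed

lemma BN_prime_multiples:
  assumes p: "prime p"
  shows "{b\<in>BN N. p dvd b} = (if p = 2 then B2 N else if p = 3 then B3 N else {b. b = p \<and> p dvd N})"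
proof -
  have pow: "p dvd q^k \<longleftrightarrow> p = q" if "prime q" "k \<ge> 1" for q k :: nat
    using that p prime_dvd_power_iff[OF p, of k q] primes_dvd_imp_eq[OF p that(1)] by auto
  have "p dvd b \<longleftrightarrow> p = 2" if "b \<in> B2 N" for b
    using B2_elem[OF that] pow[OF two_is_prime_nat] by auto
  moreover have "p dvd b \<longleftrightarrow> p = 3" if "b \<in> B3 N" for b
    using B3_elem[OF that] pow[OF prime_3_nat] by auto
  moreover have "p dvd b \<longleftrightarrow> p = b" if "prime b" for b
    using primes_dvd_imp_eq[OF p that] by auto
  ultimately show ?thesis using p by (auto simp: BN_def)
qed

lemma even_sum_multiplicity_prime_powers:
  fixes q :: nat
  assumes q: "prime q" and A: "finite A" "A \<subseteq> range (\<lambda>k. q^k)"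
  shows "even (\<Sum>b\<in>A. c b * int (multiplicity q b))
           \<longleftrightarrow> even (\<Sum>\<beta>\<in>{\<beta>. q^\<beta> \<in> A \<and> odd (c (q^\<beta>))}. \<beta>)"
proof -
  define K where "K = {\<beta>. q^\<beta> \<in> A}"
  have inj: "inj (\<lambda>k. q^k)" using prime_gt_1_nat[OF q] by (auto intro: injI)
  have AK: "A = (\<lambda>k. q^k) ` K" using A(2) by (auto simp: K_def)
  then have "finite K" using A(1) inj by (simp add: finite_image_iff inj_on_subset)
  have "(\<Sum>b\<in>A. c b * int (multiplicity q b)) = (\<Sum>\<beta>\<in>K. int \<beta> * c (q^\<beta>))"
    unfolding AK using inj q by (simp add: sum.reindex inj_on_subset mult.commute)
  also have "even \<dots> \<longleftrightarrow> even (\<Sum>\<beta>\<in>{\<beta>\<in>K. odd (c (q^\<beta>))}. int \<beta>)"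
    by (rule even_sum_mult_iff[OF \<open>finite K\<close>])
  finally show ?thesis by (simp add: K_def flip: of_nat_sum)
qed

lemma even_B_comb_2:
  assumes "N > 0"
  shows "even (B_comb N c 2) \<longleftrightarrow> even (\<Sum>\<beta>\<in>{\<beta>. 2^\<beta> \<in> B2 N \<and> odd (c (2^\<beta>))}. \<beta>)"
proof -
  have "finite (B2 N)" "B2 N \<subseteq> range (\<lambda>k. 2^k)"
    using B2_elem by (simp add: B2_def Let_def, blast)
  from even_sum_multiplicity_prime_powers[OF two_is_prime_nat this] show ?thesis
    by (simp add: B_comb_prime[OF assms] BN_prime_multiples)
qed

lemma even_B_comb_3:
  assumes "N > 0"
  shows "even (B_comb N c 3) \<longleftrightarrow> even (\<Sum>\<beta>\<in>{\<beta>. 3^\<beta> \<in> B3 N \<and> odd (c (3^\<beta>))}. \<beta>)"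
proof -
  have "finite (B3 N)" "B3 N \<subseteq> range (\<lambda>k. 3^k)"
    using B3_elem by (simp add: B3_def Let_def, blast)
  from even_sum_multiplicity_prime_powers[OF prime_3_nat this] show ?thesis
    by (simp add: B_comb_prime[OF assms prime_3_nat] BN_prime_multiples[OF prime_3_nat])
qed

lemma even_B_comb_prime:
  assumes "N > 0" and "prime p" "p \<noteq> 2" "p \<noteq> 3"
  shows "even (B_comb N c p) \<longleftrightarrow> (p dvd N \<longrightarrow> even (c p))"
  using assms
  by (cases "p dvd N") (simp_all add: B_comb_prime[OF assms(1)] BN_prime_multiples multiplicity_self)

lemma even_B_comb_iff:
  assumes N: "N > 0"
  shows "(\<forall>p. prime p \<longrightarrow> even (B_comb N c p)) \<longleftrightarrow>
     (\<forall>p. prime p \<and> p dvd N \<and> p \<noteq> 2 \<and> p \<noteq> 3 \<longrightarrow> even (c p)) \<and>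
     even (\<Sum>\<beta>\<in>{\<beta>. 2^\<beta> \<in> B2 N \<and> odd (c (2^\<beta>))}. \<beta>) \<and>
     even (\<Sum>\<beta>\<in>{\<beta>. 3^\<beta> \<in> B3 N \<and> odd (c (3^\<beta>))}. \<beta>)"
    (is "?all \<longleftrightarrow> ?others \<and> ?two \<and> ?three")
proof
  assume ?all
  moreover have "even (c p)" if "prime p \<and> p dvd N \<and> p \<noteq> 2 \<and> p \<noteq> 3" and ?all for p
    using that even_B_comb_prime[OF N, of p] by blast
  ultimately show "?others \<and> ?two \<and> ?three"
    using \<open>?all\<close>[rule_format, OF two_is_prime_nat] \<open>?all\<close>[rule_format, OF prime_3_nat]
      even_B_comb_2[OF N] even_B_comb_3[OF N] by simp
next
  assume conds: "?others \<and> ?two \<and> ?three"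
  show ?all
  proof (intro allI impI)
    fix p :: nat assume "prime p"
    then consider "p = 2" | "p = 3" | "p \<noteq> 2" "p \<noteq> 3" by blast
    then show "even (B_comb N c p)"
      using conds even_B_comb_2[OF N] even_B_comb_3[OF N] even_B_comb_prime[OF N \<open>prime p\<close>]
        \<open>prime p\<close> by cases auto
  qed
qed

lemma sysS_iff_negligible:
  assumes "N > 0"
  shows "sysS N c \<longleftrightarrow> negligible 24 True (B_comb N c)"
  unfolding sysS_def negligible_def B_comb_0 B_comb_1 even_B_comb_iff[OF assms]
  by (simp only: dvd_eq_mod_eq_0 simp_thms conj_assoc)

section \<open>Triangular reduction along an ordering of B_N\<close>

definition list_comb :: "nat \<Rightarrow> nat list \<Rightarrow> (nat \<Rightarrow> int) \<Rightarrow> nat \<Rightarrow> int" where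
  "list_comb N bs d i = (\<Sum>j<length bs. d j * basic_weights N (bs ! j) i)"

lemma list_comb_diff: "list_comb N bs (\<lambda>j. d j - e j) i = list_comb N bs d i - list_comb N bs e i"
  unfolding list_comb_def by (simp add: left_diff_distrib sum_subtractf)

lemma list_comb_add_smult:
  "list_comb N bs (\<lambda>j. d j + k * e j) i = list_comb N bs d i + k * list_comb N bs e i"
  unfolding list_comb_def by (simp add: distrib_right sum.distrib sum_distrib_left mult.assoc)

lemma B_comb_eq_list_comb:
  assumes "distinct bs" and "set bs = BN N"
  shows "B_comb N c i = list_comb N bs (\<lambda>j. c (bs ! j)) i"
  unfolding B_comb_def list_comb_def
  by (rule sum.reindex_bij_betw[symmetric, OF bij_betw_nth[OF assms(1) refl assms(2)[symmetric]]])

lemma sum_divs_evec: "N > 0 \<Longrightarrow> b \<in> divs N \<Longrightarrow> (\<Sum>n\<in>divs N. f n * evec b n) = f b"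
  by (simp add: evec_def if_distrib[of "\<lambda>x. f _ * x"] finite_divs cong: if_cong)

lemma repvec_in_SN:
  assumes N: "N > 0" and sub: "set bs \<subseteq> divs N"
  shows "repvec bs d \<in> SN N"
proof -
  have bs: "bs ! j \<in> divs N" if "j < length bs" for j using sub that by auto
  have one: "1 \<in> divs N" by (simp add: divs_def)
  have "repvec bs d n = 0" if "n \<notin> divs N" for n
    using that bs one by (auto simp: repvec_def evec_def intro!: sum.neutral)
  moreover have "(\<Sum>n\<in>divs N. repvec bs d n) =
      (\<Sum>j<length bs. d j * (\<Sum>n\<in>divs N. evec (bs ! j) n))
        - (\<Sum>j<length bs. d j) * (\<Sum>n\<in>divs N. evec 1 n)"
    unfolding repvec_def
    by (simp add: sum_subtractf sum.swap[of _ "divs N"] sum_distrib_left sum_distrib_right)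
  then have "(\<Sum>n\<in>divs N. repvec bs d n) = 0"
    using bs one sum_divs_evec[OF N, where f = "\<lambda>_. 1"] by simp
  ultimately show ?thesis by (simp add: SN_def)
qed

lemma weights_repvec:
  assumes N: "N > 0" and sub: "set bs \<subseteq> divs N"
  shows "weights N (repvec bs d) i = list_comb N bs d i"
proof -
  have bs: "bs ! j \<in> divs N" if "j < length bs" for j using sub that by auto
  have one: "1 \<in> divs N" by (simp add: divs_def)
  have "weights N (repvec bs d) i =
      (\<Sum>j<length bs. d j * (\<Sum>n\<in>divs N. weight N i n * evec (bs ! j) n))
        - (\<Sum>j<length bs. d j) * (\<Sum>n\<in>divs N. weight N i n * evec 1 n)"
    unfolding repvec_def weights_def
    by (simp add: sum_subtractf sum.swap[of _ "divs N"] sum_distrib_left sum_distrib_right algebra_simps)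
  also have "\<dots> = (\<Sum>j<length bs. d j * weight N i (bs ! j)) - (\<Sum>j<length bs. d j) * weight N i 1"
    using bs one by (simp add: sum_divs_evec[OF N])
  also have "\<dots> = list_comb N bs d i"
    by (simp add: list_comb_def basic_weights_def right_diff_distrib sum_subtractf sum_distrib_right)
  finally show ?thesis .
qed

lemma repvec_in_ZN_iff:
  assumes "N > 0" and "set bs \<subseteq> divs N"
  shows "repvec bs d \<in> ZN N \<longleftrightarrow> negligible 24 True (list_comb N bs d)"
proof -
  have "weights N (repvec bs d) = list_comb N bs d"
    by (rule ext) (rule weights_repvec[OF assms])
  then show ?thesis using ZN_iff_negligible[OF assms(1) repvec_in_SN[OF assms]] by simp
qed

lemma repvec_cong: "\<forall>j<length bs. d j = e j \<Longrightarrow> repvec bs d = repvec bs e"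
  unfolding repvec_def by (intro ext arg_cong2[of _ _ _ _ "(-)"] sum.cong) auto

lemma box_reduction_exists:
  fixes L :: "(nat \<Rightarrow> int) \<Rightarrow> bool" and \<Delta> :: "nat \<Rightarrow> int"
  assumes L0: "L (\<lambda>_. 0)"
    and L_add: "\<And>d e k. L d \<Longrightarrow> L e \<Longrightarrow> L (\<lambda>j. d j + k * e j)"
    and pivot: "\<And>i. i < n \<Longrightarrow> 0 < \<Delta> i \<and> (\<exists>w. L w \<and> (\<forall>j<i. w j = 0) \<and> w i = \<Delta> i)"
  shows "\<exists>d. (\<forall>j<n. 0 \<le> d j \<and> d j < \<Delta> j) \<and> L (\<lambda>j. d0 j - d j)"
proof -
  have "\<exists>d. (\<forall>j<k. 0 \<le> d j \<and> d j < \<Delta> j) \<and> L (\<lambda>j. d0 j - d j)" if "k \<le> n" for k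
    using that
  proof (induction k)
    case 0
    show ?case by (intro exI[of _ d0]) (simp add: L0)
  next
    case (Suc k)
    then obtain d where box: "\<forall>j<k. 0 \<le> d j \<and> d j < \<Delta> j" and L_d: "L (\<lambda>j. d0 j - d j)"
      by auto
    obtain w where pos: "0 < \<Delta> k" and w: "L w" "\<forall>j<k. w j = 0" "w k = \<Delta> k"
      using pivot Suc.prems by (metis Suc_le_lessD)
    define q where "q = d k div \<Delta> k"
    define d' where "d' j = d j - q * w j" for j
    have "L (\<lambda>j. (d0 j - d j) + q * w j)" by (rule L_add[OF L_d w(1)])
    then have "L (\<lambda>j. d0 j - d' j)" by (simp add: d'_def algebra_simps)
    moreover have "0 \<le> d' j \<and> d' j < \<Delta> j" if "j < Suc k" for j
    proof (cases "j = k")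
      case True
      have "d' k = d k mod \<Delta> k"
        by (simp add: d'_def q_def w(3) minus_div_mult_eq_mod[symmetric] mult.commute)
      then show ?thesis using True pos by simp
    next
      case False
      then show ?thesis using that box w(2) by (simp add: d'_def)
    qed
    ultimately show ?case by blast
  qed
  then show ?thesis by blast
qed

lemma box_reduction_unique:
  fixes L :: "(nat \<Rightarrow> int) \<Rightarrow> bool" and \<Delta> :: "nat \<Rightarrow> int"
  assumes L0: "L (\<lambda>_. 0)"
    and L_add: "\<And>d e k. L d \<Longrightarrow> L e \<Longrightarrow> L (\<lambda>j. d j + k * e j)"
    and minimal: "\<And>i w. i < n \<Longrightarrow> L w \<Longrightarrow> \<forall>j<i. w j = 0 \<Longrightarrow> 0 < w i \<Longrightarrow> \<Delta> i \<le> w i"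
    and d1: "\<forall>j<n. 0 \<le> d1 j \<and> d1 j < \<Delta> j" and d2: "\<forall>j<n. 0 \<le> d2 j \<and> d2 j < \<Delta> j"
    and L12: "L (\<lambda>j. d1 j - d2 j)"
  shows "\<forall>j<n. d1 j = d2 j"
proof (rule ccontr)
  assume "\<not> (\<forall>j<n. d1 j = d2 j)"
  then have ex: "\<exists>j. j < n \<and> d1 j \<noteq> d2 j" by blast
  define i where "i = (LEAST j. j < n \<and> d1 j \<noteq> d2 j)"
  have i: "i < n" "d1 i \<noteq> d2 i" using LeastI_ex[OF ex] unfolding i_def by auto
  have before: "d1 j = d2 j" if "j < i" for j
    using not_less_Least[of j "\<lambda>j. j < n \<and> d1 j \<noteq> d2 j"] that i(1) unfolding i_def by auto
  have L21: "L (\<lambda>j. d2 j - d1 j)"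
    using L_add[OF L0 L12, of "-1"] by simp
  obtain w where "L w" "w = (\<lambda>j. d1 j - d2 j) \<or> w = (\<lambda>j. d2 j - d1 j)" "0 < w i"
    using L12 L21 i(2) by (cases "d1 i < d2 i") auto
  moreover have "w i < \<Delta> i"
    using calculation(2) d1[rule_format, OF i(1)] d2[rule_format, OF i(1)] by auto
  moreover have "\<forall>j<i. w j = 0" using calculation(2) before by auto
  ultimately show False using minimal[OF i(1)] by fastforce
qed

lemma repvec_zero_in_ZN:
  assumes "N > 0" and "set bs \<subseteq> divs N"
  shows "repvec bs (\<lambda>_. 0) \<in> ZN N"
proof -
  have "list_comb N bs (\<lambda>_. 0) = (\<lambda>i. 0)" by (rule ext) (simp add: list_comb_def)
  then show ?thesis by (simp add: repvec_in_ZN_iff[OF assms])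
qed

lemma repvec_add_smult_in_ZN:
  assumes "N > 0" and "set bs \<subseteq> divs N"
    and "repvec bs d \<in> ZN N" and "repvec bs e \<in> ZN N"
  shows "repvec bs (\<lambda>j. d j + k * e j) \<in> ZN N"
  using assms(3,4) unfolding repvec_in_ZN_iff[OF assms(1,2)] list_comb_add_smult
  by (intro negligible_add negligible_smult)

lemma sysS_iff_repvec_in_ZN:
  fixes c :: "nat \<Rightarrow> int"
  assumes N: "N > 0" and bs: "distinct bs" "set bs = BN N"
  shows "sysS N c \<longleftrightarrow> repvec bs (\<lambda>j. c (bs ! j)) \<in> ZN N"
proof -
  have "B_comb N c = list_comb N bs (\<lambda>j. c (bs ! j))"
    by (rule ext) (rule B_comb_eq_list_comb[OF bs])
  then show ?thesis
    using sysS_iff_negligible[OF N] repvec_in_ZN_iff[OF N] BN_subset_divs[OF N] bs(2) by simp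
qed

lemma Delta_least:
  assumes N: "N > 0" and bs: "distinct bs" "set bs = BN N" and i: "i < length bs"
  defines "M \<equiv> {m. 1 \<le> m \<and> m \<le> 24 \<and> (\<exists>c. sysS N c \<and> (\<forall>j<i. c (bs ! j) = 0) \<and> c (bs ! i) = m)}"
  shows "Delta N bs i \<in> M" and "\<And>m. m \<in> M \<Longrightarrow> Delta N bs i \<le> m"
proof -
  define c :: "nat \<Rightarrow> int" where "c b = (if b = bs ! i then 24 else 0)" for b
  have "bs ! i \<in> BN N" using bs(2) i nth_mem by blast
  then have "B_comb N c = (\<lambda>k. 24 * basic_weights N (bs ! i) k)"
    unfolding c_def by (rule B_comb_single[OF N])
  then have "sysS N c" unfolding sysS_iff_negligible[OF N] by (simp add: negligible_def)
  moreover have "\<forall>j<i. c (bs ! j) = 0" using bs(1) i by (auto simp: c_def nth_eq_iff_index_eq)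
  ultimately have "24 \<in> M" by (auto simp: M_def c_def)
  moreover have "finite M" by (rule finite_subset[of _ "{1..24}"]) (auto simp: M_def)
  moreover have "Delta N bs i = (LEAST m. m \<in> M)" unfolding Delta_def M_def by simp
  ultimately have Min: "Delta N bs i = Min M" using Least_Min[of "\<lambda>m. m \<in> M"] by auto
  have "M \<noteq> {}" using \<open>24 \<in> M\<close> by blast
  then show "Delta N bs i \<in> M" using Min_in[OF \<open>finite M\<close>] Min by simp
  show "Delta N bs i \<le> m" if "m \<in> M" for m using Min_le[OF \<open>finite M\<close> that] Min by simp
qed

lemma Delta_pivot:
  assumes N: "N > 0" and bs: "distinct bs" "set bs = BN N" and i: "i < length bs"
  shows "0 < Delta N bs i \<and> (\<exists>w. repvec bs w \<in> ZN N \<and> (\<forall>j<i. w j = 0) \<and> w i = Delta N bs i)"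
proof -
  obtain c where "1 \<le> Delta N bs i" "sysS N c" "\<forall>j<i. c (bs ! j) = 0" "c (bs ! i) = Delta N bs i"
    using Delta_least(1)[OF assms] by blast
  then show ?thesis
    using sysS_iff_repvec_in_ZN[OF N bs] by (intro conjI exI[of _ "\<lambda>j. c (bs ! j)"]) auto
qed

lemma Delta_minimal:
  assumes N: "N > 0" and bs: "distinct bs" "set bs = BN N" and i: "i < length bs"
    and w: "repvec bs w \<in> ZN N" "\<forall>j<i. w j = 0" "0 < w i"
  shows "Delta N bs i \<le> w i"
proof (cases "w i \<le> 24")
  case True
  define c where "c b = w (inv_into {..<length bs} ((!) bs) b)" for b
  have c: "c (bs ! j) = w j" if "j < length bs" for j
    unfolding c_def using bs(1) that by (simp add: inj_on_nth)
  then have "repvec bs (\<lambda>j. c (bs ! j)) = repvec bs w" by (intro repvec_cong) simp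
  then have "sysS N c" using w(1) sysS_iff_repvec_in_ZN[OF N bs] by simp
  moreover have "\<forall>j<i. c (bs ! j) = 0" "c (bs ! i) = w i" using c w(2) i by simp_all
  ultimately have
    "w i \<in> {m. 1 \<le> m \<and> m \<le> 24 \<and> (\<exists>c. sysS N c \<and> (\<forall>j<i. c (bs ! j) = 0) \<and> c (bs ! i) = m)}"
    using True w(3) by auto
  then show ?thesis by (rule Delta_least(2)[OF assms(1-4)])
next
  case False
  then show ?thesis using Delta_least(1)[OF assms(1-4)] by simp
qed

lemma diff_repvec_in_ZN_iff:
  assumes N: "N > 0" and sub: "set bs \<subseteq> divs N" and s: "s \<in> SN N"
    and d0: "negligible 24 True (\<lambda>i. weights N s i - list_comb N bs d0 i)"
  shows "(\<lambda>n. s n - repvec bs d n) \<in> ZN N \<longleftrightarrow> repvec bs (\<lambda>j. d0 j - d j) \<in> ZN N"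
proof -
  have "(\<lambda>n. s n - repvec bs d n) \<in> SN N"
    using s repvec_in_SN[OF N sub] by (simp add: SN_def sum_subtractf)
  moreover have "weights N (\<lambda>n. s n - repvec bs d n) = (\<lambda>i. weights N s i - list_comb N bs d i)"
    by (rule ext) (simp add: weights_diff weights_repvec[OF N sub])
  ultimately have "(\<lambda>n. s n - repvec bs d n) \<in> ZN N
      \<longleftrightarrow> negligible 24 True (\<lambda>i. weights N s i - list_comb N bs d i)"
    using ZN_iff_negligible[OF N] by simp
  also have "\<dots> \<longleftrightarrow> negligible 24 True (\<lambda>i. list_comb N bs d0 i - list_comb N bs d i)"
    by (rule negligible_diff_iff[OF d0])
  also have "(\<lambda>i. list_comb N bs d0 i - list_comb N bs d i) = list_comb N bs (\<lambda>j. d0 j - d j)"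
    by (rule ext) (rule list_comb_diff[symmetric])
  finally show ?thesis by (simp add: repvec_in_ZN_iff[OF N sub])
qed

lemma repvec_reduction_exists:
  assumes N: "N > 0" and bs: "distinct bs" "set bs = BN N"
  shows "\<exists>d. (\<forall>j<length bs. 0 \<le> d j \<and> d j < Delta N bs j) \<and> repvec bs (\<lambda>j. d0 j - d j) \<in> ZN N"
proof -
  have sub: "set bs \<subseteq> divs N" using bs(2) BN_subset_divs[OF N] by simp
  show ?thesis
    by (rule box_reduction_exists[where L = "\<lambda>d. repvec bs d \<in> ZN N"])
      (rule repvec_zero_in_ZN[OF N sub], rule repvec_add_smult_in_ZN[OF N sub], assumption+,
        erule Delta_pivot[OF N bs])
qed

lemma repvec_reduction_unique:
  assumes N: "N > 0" and bs: "distinct bs" "set bs = BN N"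
    and "\<forall>j<length bs. 0 \<le> d1 j \<and> d1 j < Delta N bs j"
    and "\<forall>j<length bs. 0 \<le> d2 j \<and> d2 j < Delta N bs j"
    and "repvec bs (\<lambda>j. d1 j - d2 j) \<in> ZN N"
  shows "repvec bs d1 = repvec bs d2"
proof (rule repvec_cong)
  have sub: "set bs \<subseteq> divs N" using bs(2) BN_subset_divs[OF N] by simp
  show "\<forall>j<length bs. d1 j = d2 j"
    by (rule box_reduction_unique[where L = "\<lambda>d. repvec bs d \<in> ZN N" and \<Delta> = "Delta N bs"])
      (rule repvec_zero_in_ZN[OF N sub], rule repvec_add_smult_in_ZN[OF N sub], assumption+,
        rule Delta_minimal[OF N bs], assumption+, (rule assms)+)
qed

lemma ex1_Reps_representative:
  assumes N: "N > 0" and bs: "distinct bs" "set bs = BN N" and s: "s \<in> SN N"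
  shows "\<exists>!r\<in>Reps N bs. (\<lambda>n. s n - r n) \<in> ZN N"
proof -
  have sub: "set bs \<subseteq> divs N" using bs(2) BN_subset_divs[OF N] by simp
  obtain c where "negligible 24 True (\<lambda>i. weights N s i - B_comb N c i)"
    using B_spanned_weights[OF N s] unfolding B_spanned_def by blast
  then have "negligible 24 True (\<lambda>i. weights N s i - list_comb N bs (\<lambda>j. c (bs ! j)) i)"
    by (simp add: B_comb_eq_list_comb[OF bs])
  note in_ZN_iff = diff_repvec_in_ZN_iff[OF N sub s this]
  obtain d where d: "\<forall>j<length bs. 0 \<le> d j \<and> d j < Delta N bs j"
    and d_ZN: "repvec bs (\<lambda>j. c (bs ! j) - d j) \<in> ZN N"
    using repvec_reduction_exists[OF N bs, of "\<lambda>j. c (bs ! j)"] by blast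
  show ?thesis
  proof (rule ex1I[of _ "repvec bs d"])
    show "repvec bs d \<in> Reps N bs \<and> (\<lambda>n. s n - repvec bs d n) \<in> ZN N"
      using d d_ZN in_ZN_iff unfolding Reps_def by blast
  next
    fix r assume r: "r \<in> Reps N bs \<and> (\<lambda>n. s n - r n) \<in> ZN N"
    then obtain d' where r_eq: "r = repvec bs d'"
      and d': "\<forall>j<length bs. 0 \<le> d' j \<and> d' j < Delta N bs j"
      unfolding Reps_def by blast
    have "repvec bs (\<lambda>j. c (bs ! j) - d' j) \<in> ZN N" using in_ZN_iff r r_eq by simp
    from repvec_add_smult_in_ZN[OF N sub d_ZN this, of "-1"]
    have "repvec bs (\<lambda>j. d' j - d j) \<in> ZN N" by simp
    then show "r = repvec bs d" unfolding r_eq by (rule repvec_reduction_unique[OF N bs d' d])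
  qed
qed

theorem theorem6p8:
  fixes N :: nat and bs :: "nat list"
  assumes "N \<ge> 2" and "distinct bs" and "set bs = BN N"
  shows "Reps N bs \<subseteq> SN N \<and>
         (\<forall>s\<in>SN N. \<exists>!r\<in>Reps N bs. (\<lambda>n. s n - r n) \<in> ZN N)"
proof
  have N: "N > 0" using assms(1) by simp
  then have "set bs \<subseteq> divs N" using assms(3) BN_subset_divs by simp
  then show "Reps N bs \<subseteq> SN N" using repvec_in_SN[OF N] by (auto simp: Reps_def)
  show "\<forall>s\<in>SN N. \<exists>!r\<in>Reps N bs. (\<lambda>n. s n - r n) \<in> ZN N"
    using ex1_Reps_representative[OF N assms(2,3)] by blast
qed

end
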